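(* Let $\mathcal A$ be a Banach algebra and $\mathcal A^\sharp=\mathcal A\oplus\mathbb C$ its unitization. If $\mathcal A^\sharp$ is semiweakly amenable, then $\mathcal A$ is semiweakly amenable.
   Context: The unitization $\mathcal A^\sharp$ is $\mathcal A\oplus\mathbb C$ with product $(a,c)(b,c')=(ab+cb+c'a,cc')$. For a Banach algebra $\mathcal A$, $\mathcal A^*$ is the dual $\mathcal A$-bimodule ($\langle x,a\cdot f\rangle=\langle xa,f\rangle$, $\langle x,f\cdot a\rangle=\langle ax,f\rangle$). A derivation $D:\mathcal A\to X$ is a bounded linear map with $D(ab)=D(a)\cdot b+a\cdot D(b)$; it is inner if $D(a)=a\cdot x-x\cdot a$ for some $x\in X$. $\mathcal A$ is semiweakly amenable if every derivation $D:\mathcal A\to\mathcal A^*$ with $\langle D(a),b\rangle+\langle D(b),a\rangle=0$ for all $a,b\in\mathcal A$ is inner. *)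

theory Defs
  imports "HOL-Analysis.Analysis"
begin

text \<open>A complex Banach algebra: the underlying type is a (real) Banach space, and
  smul is a complex scalar multiplication extending the real one, compatible with
  the norm; mul is an associative, complex-bilinear, submultiplicative product.\<close>

definition cbanach_algebra :: "(complex \<Rightarrow> 'a::banach \<Rightarrow> 'a) \<Rightarrow> ('a \<Rightarrow> 'a \<Rightarrow> 'a) \<Rightarrow> bool" where
  "cbanach_algebra smul mul \<longleftrightarrow>
     (\<forall>r x. smul (complex_of_real r) x = scaleR r x) \<and>
     (\<forall>c x y. smul c (x + y) = smul c x + smul c y) \<and>
     (\<forall>c d x. smul (c + d) x = smul c x + smul d x) \<and>
     (\<forall>c d x. smul c (smul d x) = smul (c * d) x) \<and>
     (\<forall>c x. norm (smul c x) = cmod c * norm x) \<and>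
     (\<forall>x y z. mul (mul x y) z = mul x (mul y z)) \<and>
     (\<forall>x y z. mul (x + y) z = mul x z + mul y z) \<and>
     (\<forall>x y z. mul x (y + z) = mul x y + mul x z) \<and>
     (\<forall>c x y. mul (smul c x) y = smul c (mul x y)) \<and>
     (\<forall>c x y. mul x (smul c y) = smul c (mul x y)) \<and>
     (\<forall>x y. norm (mul x y) \<le> norm x * norm y)"

definition clinear_fun :: "(complex \<Rightarrow> 'a::plus \<Rightarrow> 'a) \<Rightarrow> ('a \<Rightarrow> complex) \<Rightarrow> bool" where
  "clinear_fun smul f \<longleftrightarrow>
     (\<forall>x y. f (x + y) = f x + f y) \<and> (\<forall>c x. f (smul c x) = c * f x)"

definition dual_elem :: "(complex \<Rightarrow> 'a::plus \<Rightarrow> 'a) \<Rightarrow> ('a \<Rightarrow> real) \<Rightarrow> ('a \<Rightarrow> complex) \<Rightarrow> bool" where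
  "dual_elem smul nrm f \<longleftrightarrow> clinear_fun smul f \<and> (\<exists>K. \<forall>x. cmod (f x) \<le> K * nrm x)"

text \<open>A derivation D : A \<rightarrow> A*, with D a viewed as the functional x \<mapsto> \<langle>x, D a\<rangle>.
  Module actions: \<langle>x, a\<cdot>f\<rangle> = \<langle>xa, f\<rangle>, \<langle>x, f\<cdot>a\<rangle> = \<langle>ax, f\<rangle>, so
  \<langle>x, D(ab)\<rangle> = \<langle>x, D(a)\<cdot>b\<rangle> + \<langle>x, a\<cdot>D(b)\<rangle> = \<langle>bx, D a\<rangle> + \<langle>xa, D b\<rangle>.
  Boundedness of D into A* (operator norm) is the bilinear bound.\<close>

definition dual_derivation ::
  "(complex \<Rightarrow> 'a::plus \<Rightarrow> 'a) \<Rightarrow> ('a \<Rightarrow> 'a \<Rightarrow> 'a) \<Rightarrow> ('a \<Rightarrow> real) \<Rightarrow> ('a \<Rightarrow> 'a \<Rightarrow> complex) \<Rightarrow> bool" where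
  "dual_derivation smul mul nrm D \<longleftrightarrow>
     (\<forall>a. dual_elem smul nrm (D a)) \<and>
     (\<forall>a b. D (a + b) = (\<lambda>x. D a x + D b x)) \<and>
     (\<forall>c a. D (smul c a) = (\<lambda>x. c * D a x)) \<and>
     (\<exists>K. \<forall>a x. cmod (D a x) \<le> K * nrm a * nrm x) \<and>
     (\<forall>a b x. D (mul a b) x = D a (mul b x) + D b (mul x a))"

text \<open>D is inner: D a = a\<cdot>f - f\<cdot>a for some f in A*, i.e. \<langle>x, D a\<rangle> = f(xa) - f(ax).\<close>

definition inner_dual_derivation ::
  "(complex \<Rightarrow> 'a::plus \<Rightarrow> 'a) \<Rightarrow> ('a \<Rightarrow> 'a \<Rightarrow> 'a) \<Rightarrow> ('a \<Rightarrow> real) \<Rightarrow> ('a \<Rightarrow> 'a \<Rightarrow> complex) \<Rightarrow> bool" where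
  "inner_dual_derivation smul mul nrm D \<longleftrightarrow>
     (\<exists>f. dual_elem smul nrm f \<and> (\<forall>a x. D a x = f (mul x a) - f (mul a x)))"

definition semiweakly_amenable ::
  "(complex \<Rightarrow> 'a::plus \<Rightarrow> 'a) \<Rightarrow> ('a \<Rightarrow> 'a \<Rightarrow> 'a) \<Rightarrow> ('a \<Rightarrow> real) \<Rightarrow> bool" where
  "semiweakly_amenable smul mul nrm \<longleftrightarrow>
     (\<forall>D. dual_derivation smul mul nrm D \<and> (\<forall>a b. D a b + D b a = 0)
          \<longrightarrow> inner_dual_derivation smul mul nrm D)"

definition unit_smul :: "(complex \<Rightarrow> 'a \<Rightarrow> 'a) \<Rightarrow> complex \<Rightarrow> 'a \<times> complex \<Rightarrow> 'a \<times> complex" where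
  "unit_smul smul c p = (smul c (fst p), c * snd p)"

definition unit_mul ::
  "(complex \<Rightarrow> 'a::plus \<Rightarrow> 'a) \<Rightarrow> ('a \<Rightarrow> 'a \<Rightarrow> 'a) \<Rightarrow> 'a \<times> complex \<Rightarrow> 'a \<times> complex \<Rightarrow> 'a \<times> complex" where
  "unit_mul smul mul p q =
     (mul (fst p) (fst q) + smul (snd p) (fst q) + smul (snd q) (fst p), snd p * snd q)"

definition unit_norm :: "'a::real_normed_vector \<times> complex \<Rightarrow> real" where
  "unit_norm p = norm (fst p) + cmod (snd p)"

end

theory Submission
  imports Defs
begin

text \<open>A skew-symmetric derivation \<open>D : \<A> \<rightarrow> \<A>*\<close> extends to \<open>\<A>\<^sup>\<sharp>\<close> by ignoring the scalar
  parts, \<open>\<langle>(x, \<gamma>), D\<^sup>\<sharp>(a, \<alpha>)\<rangle> = \<langle>x, D a\<rangle>\<close>. The Leibniz rule for \<open>D\<^sup>\<sharp>\<close> holds up to the term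
  \<open>\<gamma> (\<langle>b, D a\<rangle> + \<langle>a, D b\<rangle>)\<close>, which vanishes precisely by skew-symmetry. Hence \<open>D\<^sup>\<sharp>\<close> is
  inner, implemented by some \<open>g \<in> (\<A>\<^sup>\<sharp>)*\<close>, and the restriction of \<open>g\<close> to \<open>\<A>\<close> implements \<open>D\<close>.\<close>

definition unit_ext :: "('a \<Rightarrow> 'a \<Rightarrow> complex) \<Rightarrow> 'a \<times> complex \<Rightarrow> 'a \<times> complex \<Rightarrow> complex" where
  "unit_ext D p q = D (fst p) (fst q)"

lemma dual_elem_add: "dual_elem smul nrm f \<Longrightarrow> f (x + y) = f x + f y"
  and dual_elem_smul: "dual_elem smul nrm f \<Longrightarrow> f (smul c x) = c * f x"
  by (simp_all add: dual_elem_def clinear_fun_def)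

lemma dual_elem_bound_abs:
  assumes "dual_elem smul nrm f" and "\<And>x. nrm x \<ge> 0"
  obtains K where "K \<ge> 0" "\<And>x. cmod (f x) \<le> K * nrm x"
proof -
  obtain K where K: "\<And>x. cmod (f x) \<le> K * nrm x"
    using assms(1) unfolding dual_elem_def by blast
  have "cmod (f x) \<le> \<bar>K\<bar> * nrm x" for x
    using K[of x] mult_right_mono[OF abs_ge_self assms(2)] by (meson order_trans)
  then show thesis using that abs_ge_zero by blast
qed

lemma dual_elem_comp_fst:
  fixes f :: "'a::real_normed_vector \<Rightarrow> complex"
  assumes "dual_elem smul norm f"
  shows "dual_elem (unit_smul smul) unit_norm (\<lambda>q. f (fst q))"
proof -
  obtain K where "K \<ge> 0" and K: "\<And>x. cmod (f x) \<le> K * norm x"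
    using dual_elem_bound_abs[OF assms norm_ge_zero] by blast
  have "cmod (f (fst q)) \<le> K * unit_norm q" for q
    using K[of "fst q"] mult_left_mono[of "norm (fst q)" "unit_norm q" K] \<open>K \<ge> 0\<close>
    by (simp add: unit_norm_def)
  moreover have "f (fst (q + r)) = f (fst q) + f (fst r)" for q r :: "'a \<times> complex"
    by (simp add: dual_elem_add[OF assms])
  moreover have "f (fst (unit_smul smul c q)) = c * f (fst q)" for c q
    by (simp add: unit_smul_def dual_elem_smul[OF assms])
  ultimately show ?thesis
    unfolding dual_elem_def clinear_fun_def by blast
qed

lemma dual_elem_restrict_unitization:
  fixes g :: "'a::real_normed_vector \<times> complex \<Rightarrow> complex"
  assumes "dual_elem (unit_smul smul) unit_norm g"
  shows "dual_elem smul norm (\<lambda>x. g (x, 0))"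
proof -
  obtain K where K: "\<And>q. cmod (g q) \<le> K * unit_norm q"
    using assms unfolding dual_elem_def by blast
  have "g (x + y, 0) = g (x, 0) + g (y, 0)" for x y
    using dual_elem_add[OF assms, of "(x, 0)" "(y, 0)"] by simp
  moreover have "g (smul c x, 0) = c * g (x, 0)" for c x
    using dual_elem_smul[OF assms, of c "(x, 0)"] by (simp add: unit_smul_def)
  moreover have "cmod (g (x, 0)) \<le> K * norm x" for x
    using K[of "(x, 0)"] by (simp add: unit_norm_def)
  ultimately show ?thesis
    unfolding dual_elem_def clinear_fun_def by blast
qed

lemma dual_derivation_unit_ext:
  fixes D :: "'a::real_normed_vector \<Rightarrow> 'a \<Rightarrow> complex"
  assumes der: "dual_derivation smul mul norm D"
    and skew: "\<And>a b. D a b + D b a = 0"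
  shows "dual_derivation (unit_smul smul) (unit_mul smul mul) unit_norm (unit_ext D)"
proof -
  have elem: "\<And>a. dual_elem smul norm (D a)"
    and add: "\<And>a b. D (a + b) = (\<lambda>x. D a x + D b x)"
    and smul: "\<And>c a. D (smul c a) = (\<lambda>x. c * D a x)"
    and leibniz: "\<And>a b x. D (mul a b) x = D a (mul b x) + D b (mul x a)"
    using der unfolding dual_derivation_def by auto
  obtain K where K: "\<And>a x. cmod (D a x) \<le> K * norm a * norm x"
    using der unfolding dual_derivation_def by auto
  have bound: "cmod (unit_ext D p q) \<le> \<bar>K\<bar> * unit_norm p * unit_norm q"
    for p q :: "'a \<times> complex"
  proof -
    have "K * norm (fst p) * norm (fst q) \<le> \<bar>K\<bar> * unit_norm p * unit_norm q"
      by (intro mult_mono) (auto simp: unit_norm_def intro: mult_mono)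
    with K[of "fst p" "fst q"] show ?thesis
      unfolding unit_ext_def by linarith
  qed
  have unit_leibniz: "unit_ext D (unit_mul smul mul p q) r
      = unit_ext D p (unit_mul smul mul q r) + unit_ext D q (unit_mul smul mul r p)" for p q r
  proof -
    obtain a \<alpha> b \<beta> x \<gamma> where pqr: "p = (a, \<alpha>)" "q = (b, \<beta>)" "r = (x, \<gamma>)"
      by (metis prod.exhaust)
    have "unit_ext D p (unit_mul smul mul q r) + unit_ext D q (unit_mul smul mul r p)
        = D (mul a b) x + \<alpha> * D b x + \<beta> * D a x + \<gamma> * (D a b + D b a)"
      by (simp add: pqr unit_ext_def unit_mul_def leibniz
          dual_elem_add[OF elem] dual_elem_smul[OF elem] algebra_simps)
    also have "\<dots> = unit_ext D (unit_mul smul mul p q) r"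
      by (simp add: pqr unit_ext_def unit_mul_def skew add smul)
    finally show ?thesis ..
  qed
  show ?thesis
    unfolding dual_derivation_def
  proof (intro conjI allI exI)
    show "dual_elem (unit_smul smul) unit_norm (unit_ext D p)" for p
      using dual_elem_comp_fst[OF elem] unfolding unit_ext_def[abs_def] .
    show "unit_ext D (p + q) = (\<lambda>r. unit_ext D p r + unit_ext D q r)" for p q
      by (simp add: unit_ext_def add fun_eq_iff)
    show "unit_ext D (unit_smul smul c p) = (\<lambda>r. c * unit_ext D p r)" for c p
      by (simp add: unit_ext_def unit_smul_def smul fun_eq_iff)
  qed (fact bound unit_leibniz)+
qed

lemma inner_dual_derivation_restrict_unitization:
  fixes D :: "'a::real_normed_vector \<Rightarrow> 'a \<Rightarrow> complex"
  assumes "inner_dual_derivation (unit_smul smul) (unit_mul smul mul) unit_norm (unit_ext D)"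
  shows "inner_dual_derivation smul mul norm D"
proof -
  obtain g where g: "dual_elem (unit_smul smul) unit_norm g"
    and inner: "\<And>p q. unit_ext D p q = g (unit_mul smul mul q p) - g (unit_mul smul mul p q)"
    using assms unfolding inner_dual_derivation_def by blast
  have g_smul_zero: "g (smul 0 y, 0) = 0" for y
    using dual_elem_smul[OF g, of 0 "(y, 0)"] by (simp add: unit_smul_def)
  \<comment> \<open>The cross terms \<open>smul 0 _\<close> of \<open>(x, 0) (a, 0)\<close> are killed by the linearity of \<open>g\<close> alone.\<close>
  have g_mul: "g (unit_mul smul mul (x, 0) (a, 0)) = g (mul x a, 0)" for x a
    using dual_elem_add[OF g, of "(mul x a + smul 0 a, 0)" "(smul 0 x, 0)"]
      dual_elem_add[OF g, of "(mul x a, 0)" "(smul 0 a, 0)"]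
    by (simp add: unit_mul_def g_smul_zero)
  have "D a x = g (mul x a, 0) - g (mul a x, 0)" for a x
    using inner[of "(a, 0)" "(x, 0)"] by (simp add: unit_ext_def g_mul)
  with dual_elem_restrict_unitization[OF g] show ?thesis
    unfolding inner_dual_derivation_def by blast
qed

theorem theorem3p8:
  fixes smul :: "complex \<Rightarrow> 'a::banach \<Rightarrow> 'a" and mul :: "'a \<Rightarrow> 'a \<Rightarrow> 'a"
  assumes "cbanach_algebra smul mul"
    and "semiweakly_amenable (unit_smul smul) (unit_mul smul mul) unit_norm"
  shows "semiweakly_amenable smul mul norm"
  unfolding semiweakly_amenable_def
proof (intro allI impI)
  fix D :: "'a \<Rightarrow> 'a \<Rightarrow> complex"
  assume D_skew: "dual_derivation smul mul norm D \<and> (\<forall>a b. D a b + D b a = 0)"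
  then have "dual_derivation (unit_smul smul) (unit_mul smul mul) unit_norm (unit_ext D)"
    using dual_derivation_unit_ext by blast
  moreover have "\<forall>p q. unit_ext D p q + unit_ext D q p = 0"
    using D_skew by (simp add: unit_ext_def)
  ultimately have "inner_dual_derivation (unit_smul smul) (unit_mul smul mul) unit_norm (unit_ext D)"
    using assms(2) unfolding semiweakly_amenable_def by simp
  then show "inner_dual_derivation smul mul norm D"
    by (rule inner_dual_derivation_restrict_unitization)
qed

end
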